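(* Let $m\ge 1$ and $n\ge 2$ be integers. Assume that $G$ is a topological group such that $c_0(G)=c(G)$ and this subgroup has index $n$ in $G$. Then a space $X$ has precisely $m$ connected components if and only if the connected component $c(C_p(X,G))$ of the identity has index $n^m$ in $C_p(X,G)$.
   Context: All spaces are Tychonoff and non-empty; topological groups are Hausdorff. For a topological group $K$, $c(K)$ is the connected component of the identity and $c_0(K)$ is the pathwise connected component of the identity (union of all pathwise connected subsets containing the identity). $C_p(X,G)$ is the group of continuous maps $X\to G$ with pointwise operations and the topology of pointwise convergence. *)

theory Defs
  imports "HOL-Analysis.Analysis" "HOL-Algebra.Group" "HOL-Algebra.Coset"
begin

definition tychonoff_space :: "'a topology \<Rightarrow> bool" where
  "tychonoff_space X \<longleftrightarrow> completely_regular_space X \<and> t1_space X"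

definition topological_group :: "('g, 'b) monoid_scheme \<Rightarrow> 'g topology \<Rightarrow> bool" where
  "topological_group G T \<longleftrightarrow>
     group G \<and> topspace T = carrier G \<and> Hausdorff_space T \<and>
     continuous_map (prod_topology T T) T (\<lambda>(x, y). x \<otimes>\<^bsub>G\<^esub> y) \<and>
     continuous_map T T (\<lambda>x. inv\<^bsub>G\<^esub> x)"

definition Cp_group :: "'a topology \<Rightarrow> ('g, 'b) monoid_scheme \<Rightarrow> 'g topology \<Rightarrow> ('a \<Rightarrow> 'g) monoid" where
  "Cp_group X G T =
     \<lparr> carrier = {f. continuous_map X T f \<and> f \<in> extensional (topspace X)},
       mult = (\<lambda>f g. restrict (\<lambda>x. f x \<otimes>\<^bsub>G\<^esub> g x) (topspace X)),
       one = restrict (\<lambda>x. \<one>\<^bsub>G\<^esub>) (topspace X) \<rparr>"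

definition Cp_topology :: "'a topology \<Rightarrow> ('g, 'b) monoid_scheme \<Rightarrow> 'g topology \<Rightarrow> ('a \<Rightarrow> 'g) topology" where
  "Cp_topology X G T =
     subtopology (product_topology (\<lambda>_. T) (topspace X)) (carrier (Cp_group X G T))"

end

theory Submission
  imports Defs
begin

text \<open>
  The identity component of \<open>C\<^sub>p(X,G)\<close> is the group of continuous maps with values in
  \<open>c(G)\<close>. Evaluation at a point gives one inclusion. For the other, given such a map \<open>f\<close> and
  a finite \<open>F \<subseteq> X\<close>, complete regularity of \<open>X\<close> and path connectedness of \<open>c(G)\<close> produce,
  one point at a time, a path in \<open>C\<^sub>p(X,G)\<close> from the identity to a map agreeing with \<open>f\<close>
  on \<open>F\<close>; so \<open>f\<close> lies in the closure of the (closed) identity component.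

  Hence two maps lie in the same coset iff their values lie in the same cosets of \<open>c(G)\<close>
  pointwise. These value cosets are constant on connected components, and if \<open>X\<close> has
  finitely many components (which are then open) every assignment of cosets to components
  is realised by a locally constant map: the index is \<open>n\<^sup>m\<close>. Conversely, if the index is
  finite and \<open>a \<notin> c(G)\<close>, the maps equal to \<open>a\<close> on a clopen set and to \<open>1\<close> elsewhere lie in
  pairwise distinct cosets, so \<open>X\<close> has finitely many clopen sets and hence finitely many
  (quasi-)components.
\<close>

lemma topological_group_mult:
  assumes "topological_group G T" "continuous_map Z T f" "continuous_map Z T g"
  shows "continuous_map Z T (\<lambda>z. f z \<otimes>\<^bsub>G\<^esub> g z)"
proof -
  have "continuous_map (prod_topology T T) T (\<lambda>(x, y). x \<otimes>\<^bsub>G\<^esub> y)"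
    using assms(1) by (simp add: topological_group_def)
  from continuous_map_compose[OF continuous_map_pairedI[OF assms(2,3)] this]
  show ?thesis by (simp add: o_def)
qed

lemma topological_group_inv:
  assumes "topological_group G T" "continuous_map Z T f"
  shows "continuous_map Z T (\<lambda>z. inv\<^bsub>G\<^esub> f z)"
  using assms continuous_map_compose[of Z T f T "\<lambda>x. inv\<^bsub>G\<^esub> x"]
  by (simp add: topological_group_def o_def)

lemma subgroup_connected_component_of_one:
  fixes G (structure)
  assumes TG: "topological_group G T"
  shows "subgroup (connected_component_of_set T \<one>) G"
proof -
  interpret group G using TG by (simp add: topological_group_def)
  let ?C = "connected_component_of_set T \<one>"
  have top: "topspace T = carrier G" using TG by (simp add: topological_group_def)
  have one: "\<one> \<in> ?C" by (simp add: top connected_component_of_refl)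
  have C_carrier: "?C \<subseteq> carrier G"
    using connected_component_of_subset_topspace top by metis
  have image_C: "f ` ?C \<subseteq> ?C" if f: "continuous_map T T f" and f1: "f \<one> \<in> ?C" for f
  proof -
    have "f ` ?C \<subseteq> connected_component_of_set T (f \<one>)"
      using connected_component_of_maximal[OF connectedin_continuous_map_image[OF f
            connectedin_connected_component_of]] one by blast
    also have "connected_component_of_set T (f \<one>) = ?C"
      using f1 connected_component_of_equiv by (metis mem_Collect_eq)
    finally show ?thesis .
  qed
  show ?thesis
  proof
    fix a b assume a: "a \<in> ?C" and b: "b \<in> ?C"
    have "continuous_map T T (\<lambda>x. a \<otimes> x)"
      using a C_carrier top by (intro topological_group_mult[OF TG]) auto
    moreover have "a \<otimes> \<one> \<in> ?C"
      using a C_carrier by auto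
    ultimately show "a \<otimes> b \<in> ?C"
      using image_C[of "\<lambda>x. a \<otimes> x"] b by blast
  next
    fix a assume "a \<in> ?C"
    moreover have "continuous_map T T (\<lambda>x. inv x)"
      using TG by (simp add: topological_group_def)
    ultimately show "inv a \<in> ?C"
      using image_C[of "\<lambda>x. inv x"] one by auto
  qed (use one C_carrier in auto)
qed

lemma (in group) rcos_eq_iff_mult_inv:
  assumes "subgroup H G" "x \<in> carrier G" "y \<in> carrier G"
  shows "H #> x = H #> y \<longleftrightarrow> y \<otimes> inv x \<in> H"
  using assms repr_independence repr_independenceD subgroup.rcos_module[OF _ is_group]
  by metis

lemma (in group) rcos_eq_if_rcos_eq_subset:
  assumes "subgroup H G" "S \<subseteq> H" "\<one> \<in> S" "x \<in> carrier G" "y \<in> carrier G"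
    and "S #> x = S #> y"
  shows "H #> x = H #> y"
proof -
  have "y \<in> S #> y"
    using assms(3,5) by (force simp: r_coset_def)
  then have "y \<in> S #> x"
    using assms(6) by simp
  then have "y \<in> H #> x"
    using assms(2) by (auto simp: r_coset_def)
  then show ?thesis
    using repr_independence assms(1,4) by blast
qed

lemma (in group) rcosets_carrier: "rcosets (carrier G) = {carrier G}"
  using coset_join2[OF _ subgroup_self] by (auto simp: RCOSETS_def)

lemma card_image_eq_card_image:
  assumes "\<And>x y. x \<in> A \<Longrightarrow> y \<in> A \<Longrightarrow> f x = f y \<longleftrightarrow> g x = g y"
  shows "card (f ` A) = card (g ` A)"
proof -
  let ?h = "\<lambda>y. f (inv_into A g y)"
  have h: "?h (g x) = f x" if "x \<in> A" for x
    using assms[of "inv_into A g (g x)" x] that by (simp add: inv_into_into f_inv_into_f)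
  have "f ` A = ?h ` g ` A"
    unfolding image_image using h by (intro image_cong) auto
  moreover have "inj_on ?h (g ` A)"
  proof (rule inj_onI, clarify)
    fix x y assume "x \<in> A" "y \<in> A" "?h (g x) = ?h (g y)"
    then show "g x = g y" using h assms by metis
  qed
  ultimately show ?thesis
    by (simp add: card_image)
qed

lemma continuous_map_locally_constant:
  assumes "f \<in> topspace X \<rightarrow> topspace Y"
    and "\<And>x. x \<in> topspace X \<Longrightarrow> \<exists>U. openin X U \<and> x \<in> U \<and> (\<forall>y\<in>U. f y = f x)"
  shows "continuous_map X Y f"
  unfolding continuous_map_def
proof (intro conjI allI impI)
  fix V
  have "\<exists>U. openin X U \<and> x \<in> U \<and> U \<subseteq> {x \<in> topspace X. f x \<in> V}"
    if x: "x \<in> {x \<in> topspace X. f x \<in> V}" for x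
  proof -
    obtain U where U: "openin X U" "x \<in> U" "\<forall>y\<in>U. f y = f x"
      using assms(2) x by blast
    have "y \<in> {x \<in> topspace X. f x \<in> V}" if "y \<in> U" for y
      using that x U(3) openin_subset[OF U(1)] by (metis (mono_tags, lifting) mem_Collect_eq subsetD)
    then have "U \<subseteq> {x \<in> topspace X. f x \<in> V}"
      by blast
    with U show ?thesis by blast
  qed
  then show "openin X {x \<in> topspace X. f x \<in> V}"
    using openin_subopen by blast
qed (rule assms(1))

lemma continuous_map_if_clopen:
  assumes "closedin X U" "openin X U" "a \<in> topspace Y" "b \<in> topspace Y"
  shows "continuous_map X Y (\<lambda>x. if x \<in> U then a else b)"
proof (rule continuous_map_locally_constant)
  show "(\<lambda>x. if x \<in> U then a else b) \<in> topspace X \<rightarrow> topspace Y"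
    using assms(3,4) by simp
  fix x assume x: "x \<in> topspace X"
  show "\<exists>W. openin X W \<and> x \<in> W \<and> (\<forall>y\<in>W. (if y \<in> U then a else b) = (if x \<in> U then a else b))"
  proof (cases "x \<in> U")
    case True
    then show ?thesis
      using assms(2) by (intro exI[of _ U]) auto
  next
    case False
    have "openin X (topspace X - U)"
      using assms(1) by blast
    then show ?thesis
      using False x by (intro exI[of _ "topspace X - U"]) auto
  qed
qed

lemma continuous_map_constant_on_components:
  assumes "finite (connected_components_of X)"
    and "w \<in> connected_components_of X \<rightarrow> topspace Y"
  shows "continuous_map X Y (\<lambda>x. w (connected_component_of_set X x))"
proof (rule continuous_map_locally_constant)
  show "(\<lambda>x. w (connected_component_of_set X x)) \<in> topspace X \<rightarrow> topspace Y"
    using assms(2) by (auto simp: connected_component_in_connected_components_of)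
  fix x assume x: "x \<in> topspace X"
  let ?C = "connected_component_of_set X x"
  have "openin X ?C"
    using open_in_finite_connected_components[OF assms(1)] x
    by (simp add: connected_component_in_connected_components_of)
  moreover have "x \<in> ?C"
    using x by (simp add: connected_component_of_refl)
  moreover have "\<forall>y\<in>?C. w (connected_component_of_set X y) = w ?C"
    by (metis connected_component_of_equiv mem_Collect_eq)
  ultimately show "\<exists>U. openin X U \<and> x \<in> U \<and>
      (\<forall>y\<in>U. w (connected_component_of_set X y) = w ?C)"
    by blast
qed

lemma finite_connected_components_of_finite_clopen:
  assumes "finite {U. closedin X U \<and> openin X U}"
  shows "finite (connected_components_of X)"
proof -
  let ?clopen = "{U. closedin X U \<and> openin X U}"
  define trace where "trace x = {U \<in> ?clopen. x \<in> U}" for x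
  have trace_eq: "trace y = trace x \<longleftrightarrow> (\<forall>U. closedin X U \<and> openin X U \<longrightarrow> (x \<in> U \<longleftrightarrow> y \<in> U))"
    for x y unfolding trace_def by blast
  have "quasi_components_of X \<subseteq> (\<lambda>S. {y \<in> topspace X. trace y = S}) ` Pow ?clopen"
    unfolding quasi_components_of_def
  proof (rule image_subsetI)
    fix x assume "x \<in> topspace X"
    then have "quasi_component_of_set X x = {y \<in> topspace X. trace y = trace x}"
      unfolding trace_eq quasi_component_of_def by simp
    moreover have "trace x \<in> Pow ?clopen"
      by (auto simp: trace_def)
    ultimately show "quasi_component_of_set X x \<in> (\<lambda>S. {y \<in> topspace X. trace y = S}) ` Pow ?clopen"
      by (simp only: image_eqI)
  qed
  then have "finite (quasi_components_of X)"
    using assms finite_subset by blast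
  then show ?thesis
    using quasi_eq_connected_components_of by metis
qed

lemma path_image_subset_connected_component_of:
  "pathin X g \<Longrightarrow> g ` {0..1} \<subseteq> connected_component_of_set X (g 0)"
  by (rule connected_component_of_maximal[OF connectedin_path_image]) auto

lemma continuous_map_mult_one_minus:
  fixes \<phi> :: "'a \<Rightarrow> real"
  assumes "continuous_map X (top_of_set {0..1}) \<phi>"
  shows "continuous_map (prod_topology (top_of_set {0..1}) X) (top_of_set {0..1})
           (\<lambda>(t, x). t * (1 - \<phi> x))"
  unfolding continuous_map_in_subtopology
proof
  have "continuous_map (prod_topology (top_of_set {0..1}) X) euclideanreal fst"
    by (metis continuous_map_fst continuous_map_in_subtopology)
  moreover have "continuous_map (prod_topology (top_of_set {0..1}) X) euclideanreal (\<lambda>z. \<phi> (snd z))"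
    using continuous_map_compose[OF continuous_map_snd] assms
    by (fastforce simp: continuous_map_in_subtopology o_def)
  ultimately show "continuous_map (prod_topology (top_of_set {0..1}) X) euclideanreal
      (\<lambda>(t, x). t * (1 - \<phi> x))"
    unfolding case_prod_unfold by (intro continuous_intros)
  have "\<phi> x \<in> {0..1}" if "x \<in> topspace X" for x
    using continuous_map_image_subset_topspace[OF assms] that by auto
  then show "(\<lambda>(t, x). t * (1 - \<phi> x)) \<in> topspace (prod_topology (top_of_set {0..1}) X) \<rightarrow> {0..1}"
    by (fastforce intro: mult_le_one)
qed

lemma in_closure_of_product_topology:
  assumes f: "f \<in> topspace (product_topology Y I)"
    and agree: "\<And>F. finite F \<Longrightarrow> F \<subseteq> I \<Longrightarrow> \<exists>g\<in>S. \<forall>i\<in>F. g i = f i"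
    and S: "S \<subseteq> topspace (product_topology Y I)"
  shows "f \<in> product_topology Y I closure_of S"
  unfolding in_closure_of
proof (intro conjI allI impI)
  fix U assume "f \<in> U \<and> openin (product_topology Y I) U"
  then obtain W where W: "finite {i \<in> I. W i \<noteq> topspace (Y i)}" "f \<in> Pi\<^sub>E I W" "Pi\<^sub>E I W \<subseteq> U"
    unfolding openin_product_topology_alt by blast
  obtain g where g: "g \<in> S" "\<forall>i\<in>{i \<in> I. W i \<noteq> topspace (Y i)}. g i = f i"
    using agree[OF W(1)] by blast
  have "g i \<in> W i" if "i \<in> I" for i
  proof (cases "W i = topspace (Y i)")
    case True
    then show ?thesis using g(1) S that by (auto simp: PiE_iff)
  next
    case False
    then show ?thesis using g(2) W(2) that by (auto simp: PiE_iff)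
  qed
  moreover have "g \<in> extensional I"
    using g(1) S by (auto simp: PiE_iff)
  ultimately have "g \<in> Pi\<^sub>E I W"
    by (simp add: PiE_iff)
  then show "\<exists>y. y \<in> S \<and> y \<in> U"
    using g(1) W(3) by blast
qed (use f in simp)

locale Cp_space =
  fixes X :: "'a topology" and G :: "('g, 'b) monoid_scheme" (structure) and T :: "'g topology"
  assumes topological_group: "topological_group G T"
begin

sublocale group G
  using topological_group by (simp add: topological_group_def)

abbreviation G0 :: "'g set" where "G0 \<equiv> connected_component_of_set T \<one>"
abbreviation Cp :: "('a \<Rightarrow> 'g) monoid" where "Cp \<equiv> Cp_group X G T"
abbreviation Cp_top :: "('a \<Rightarrow> 'g) topology" where "Cp_top \<equiv> Cp_topology X G T"
abbreviation Cp0 :: "('a \<Rightarrow> 'g) set" where "Cp0 \<equiv> connected_component_of_set Cp_top \<one>\<^bsub>Cp\<^esub>"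

definition Cp_into_G0 :: "('a \<Rightarrow> 'g) set"
  where "Cp_into_G0 = {f \<in> carrier Cp. f ` topspace X \<subseteq> G0}"

lemma topspace_eq_carrier: "topspace T = carrier G"
  using topological_group by (simp add: topological_group_def)

lemma subgroup_G0: "subgroup G0 G"
  using subgroup_connected_component_of_one[OF topological_group] .

lemma G0_subset_carrier: "G0 \<subseteq> carrier G"
  using subgroup.subset[OF subgroup_G0] .

lemma carrier_Cp: "f \<in> carrier Cp \<longleftrightarrow> continuous_map X T f \<and> f \<in> extensional (topspace X)"
  by (simp add: Cp_group_def)

lemma mult_Cp: "f \<otimes>\<^bsub>Cp\<^esub> g = restrict (\<lambda>x. f x \<otimes> g x) (topspace X)"
  by (simp add: Cp_group_def)

lemma one_Cp: "\<one>\<^bsub>Cp\<^esub> = restrict (\<lambda>x. \<one>) (topspace X)"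
  by (simp add: Cp_group_def)

lemma restrict_in_carrier_Cp:
  "continuous_map X T f \<Longrightarrow> restrict f (topspace X) \<in> carrier Cp"
  by (simp add: carrier_Cp continuous_map_eq[of X T f])

lemma Cp_apply_carrier: "f \<in> carrier Cp \<Longrightarrow> x \<in> topspace X \<Longrightarrow> f x \<in> carrier G"
  using continuous_map_image_subset_topspace topspace_eq_carrier by (fastforce simp: carrier_Cp)

lemma pointwise_inv_Cp:
  assumes "f \<in> carrier Cp"
  shows "restrict (\<lambda>x. inv f x) (topspace X) \<in> carrier Cp"
    and "restrict (\<lambda>x. inv f x) (topspace X) \<otimes>\<^bsub>Cp\<^esub> f = \<one>\<^bsub>Cp\<^esub>"
  using assms
  by (auto simp: carrier_Cp mult_Cp one_Cp Cp_apply_carrier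
      intro!: restrict_in_carrier_Cp[unfolded carrier_Cp] topological_group_inv[OF topological_group])

lemma group_Cp: "group Cp"
proof (rule groupI)
  fix f g assume "f \<in> carrier Cp" "g \<in> carrier Cp"
  then show "f \<otimes>\<^bsub>Cp\<^esub> g \<in> carrier Cp"
    unfolding carrier_Cp mult_Cp
    by (auto intro: restrict_in_carrier_Cp[unfolded carrier_Cp] topological_group_mult[OF topological_group])
next
  show "\<one>\<^bsub>Cp\<^esub> \<in> carrier Cp"
    unfolding one_Cp by (rule restrict_in_carrier_Cp) (simp add: topspace_eq_carrier)
next
  fix f g h assume "f \<in> carrier Cp" "g \<in> carrier Cp" "h \<in> carrier Cp"
  then show "f \<otimes>\<^bsub>Cp\<^esub> g \<otimes>\<^bsub>Cp\<^esub> h = f \<otimes>\<^bsub>Cp\<^esub> (g \<otimes>\<^bsub>Cp\<^esub> h)"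
    by (auto simp: mult_Cp m_assoc Cp_apply_carrier)
next
  fix f assume "f \<in> carrier Cp"
  then show "\<one>\<^bsub>Cp\<^esub> \<otimes>\<^bsub>Cp\<^esub> f = f"
    by (auto simp: mult_Cp one_Cp Cp_apply_carrier carrier_Cp extensional_def)
next
  fix f assume "f \<in> carrier Cp"
  then show "\<exists>g\<in>carrier Cp. g \<otimes>\<^bsub>Cp\<^esub> f = \<one>\<^bsub>Cp\<^esub>"
    using pointwise_inv_Cp by blast
qed

sublocale Cp: group Cp
  by (rule group_Cp)

lemma inv_Cp: "f \<in> carrier Cp \<Longrightarrow> inv\<^bsub>Cp\<^esub> f = restrict (\<lambda>x. inv f x) (topspace X)"
  using Cp.inv_equality pointwise_inv_Cp by blast

lemma subgroup_Cp_into_G0: "subgroup Cp_into_G0 Cp"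
proof (rule Cp.subgroupI)
  show "Cp_into_G0 \<subseteq> carrier Cp"
    by (auto simp: Cp_into_G0_def)
  show "Cp_into_G0 \<noteq> {}"
    using Cp.one_closed subgroup.one_closed[OF subgroup_G0]
    by (auto simp: Cp_into_G0_def one_Cp)
next
  fix f assume "f \<in> Cp_into_G0"
  then show "inv\<^bsub>Cp\<^esub> f \<in> Cp_into_G0"
    using pointwise_inv_Cp(1) subgroup.m_inv_closed[OF subgroup_G0]
    by (auto simp: Cp_into_G0_def inv_Cp)
next
  fix f g assume "f \<in> Cp_into_G0" "g \<in> Cp_into_G0"
  then show "f \<otimes>\<^bsub>Cp\<^esub> g \<in> Cp_into_G0"
    using Cp.m_closed subgroup.m_closed[OF subgroup_G0]
    by (auto simp: Cp_into_G0_def mult_Cp image_subset_iff)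
qed

lemma topspace_Cp_top: "topspace Cp_top = carrier Cp"
proof -
  have "carrier Cp \<subseteq> (\<Pi>\<^sub>E x\<in>topspace X. topspace T)"
    using Cp_apply_carrier by (auto simp: PiE_iff carrier_Cp topspace_eq_carrier extensional_def)
  then show ?thesis
    unfolding Cp_topology_def by auto
qed

lemma continuous_map_Cp_top_iff:
  "continuous_map Z Cp_top p \<longleftrightarrow>
     p \<in> topspace Z \<rightarrow> carrier Cp \<and> (\<forall>x\<in>topspace X. continuous_map Z T (\<lambda>z. p z x))"
  unfolding Cp_topology_def continuous_map_in_subtopology continuous_map_componentwise
  by (auto simp: carrier_Cp)

lemma continuous_map_Cp_mult:
  assumes "continuous_map Z Cp_top p" "continuous_map Z Cp_top q"
  shows "continuous_map Z Cp_top (\<lambda>z. p z \<otimes>\<^bsub>Cp\<^esub> q z)"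
  unfolding continuous_map_Cp_top_iff
proof (intro conjI ballI funcsetI)
  fix z assume "z \<in> topspace Z"
  then show "p z \<otimes>\<^bsub>Cp\<^esub> q z \<in> carrier Cp"
    using assms by (auto simp: continuous_map_Cp_top_iff)
next
  fix x assume "x \<in> topspace X"
  then show "continuous_map Z T (\<lambda>z. (p z \<otimes>\<^bsub>Cp\<^esub> q z) x)"
    using assms
    by (auto simp: continuous_map_Cp_top_iff mult_Cp intro!: topological_group_mult[OF topological_group])
qed

lemma continuous_map_Cp_top_uncurry:
  assumes "continuous_map (prod_topology Z X) T g"
  shows "continuous_map Z Cp_top (\<lambda>z. restrict (\<lambda>x. g (z, x)) (topspace X))"
  unfolding continuous_map_Cp_top_iff
proof (intro conjI ballI funcsetI)
  fix z assume "z \<in> topspace Z"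
  then have "continuous_map X T (\<lambda>x. g (z, x))"
    using continuous_map_compose[OF continuous_map_pairedI assms, of X "\<lambda>_. z" id]
    by (simp add: o_def)
  then show "restrict (\<lambda>x. g (z, x)) (topspace X) \<in> carrier Cp"
    by (rule restrict_in_carrier_Cp)
next
  fix x assume "x \<in> topspace X"
  then have "continuous_map Z T (\<lambda>z. g (z, x))"
    using continuous_map_compose[OF continuous_map_pairedI assms, of Z id "\<lambda>_. x"]
    by (simp add: o_def)
  then show "continuous_map Z T (\<lambda>z. restrict (\<lambda>x. g (z, x)) (topspace X) x)"
    using \<open>x \<in> topspace X\<close> by simp
qed

lemma one_in_Cp0: "\<one>\<^bsub>Cp\<^esub> \<in> Cp0"
  by (simp add: connected_component_of_refl topspace_Cp_top)

lemma Cp0_subset_Cp_into_G0: "Cp0 \<subseteq> Cp_into_G0"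
proof
  fix f assume f: "f \<in> Cp0"
  then have "f \<in> carrier Cp"
    using connected_component_of_subset_topspace topspace_Cp_top by (metis subsetD)
  moreover have "f x \<in> G0" if x: "x \<in> topspace X" for x
  proof -
    have eval: "continuous_map Cp_top T (\<lambda>f. f x)"
      using continuous_map_Cp_top_iff[of Cp_top id] x by (simp add: topspace_Cp_top)
    have "\<one>\<^bsub>Cp\<^esub> x \<in> (\<lambda>f. f x) ` Cp0"
      using one_in_Cp0 by (rule imageI)
    then have "\<one> \<in> (\<lambda>f. f x) ` Cp0"
      using x by (simp add: one_Cp)
    then have "(\<lambda>f. f x) ` Cp0 \<subseteq> G0"
      by (rule connected_component_of_maximal[OF connectedin_continuous_map_image[OF eval
            connectedin_connected_component_of]])
    then show ?thesis using f by blast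
  qed
  ultimately show "f \<in> Cp_into_G0"
    by (auto simp: Cp_into_G0_def)
qed

lemma rcos_G0_eq_iff:
  "x \<in> carrier G \<Longrightarrow> y \<in> carrier G \<Longrightarrow> G0 #> x = G0 #> y \<longleftrightarrow> y \<otimes> inv x \<in> G0"
  by (rule rcos_eq_iff_mult_inv[OF subgroup_G0])

lemma rcos_Cp_into_G0_eq_iff:
  assumes "f \<in> carrier Cp" "g \<in> carrier Cp"
  shows "Cp_into_G0 #>\<^bsub>Cp\<^esub> f = Cp_into_G0 #>\<^bsub>Cp\<^esub> g \<longleftrightarrow> (\<forall>x\<in>topspace X. G0 #> f x = G0 #> g x)"
proof -
  have "g \<otimes>\<^bsub>Cp\<^esub> inv\<^bsub>Cp\<^esub> f = restrict (\<lambda>x. g x \<otimes> inv f x) (topspace X)"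
    using assms by (auto simp: inv_Cp mult_Cp fun_eq_iff)
  moreover have "g \<otimes>\<^bsub>Cp\<^esub> inv\<^bsub>Cp\<^esub> f \<in> carrier Cp"
    using assms by simp
  ultimately have "g \<otimes>\<^bsub>Cp\<^esub> inv\<^bsub>Cp\<^esub> f \<in> Cp_into_G0 \<longleftrightarrow> (\<forall>x\<in>topspace X. g x \<otimes> inv f x \<in> G0)"
    by (simp add: Cp_into_G0_def image_subset_iff)
  also have "\<dots> \<longleftrightarrow> (\<forall>x\<in>topspace X. G0 #> f x = G0 #> g x)"
    using assms by (simp add: rcos_G0_eq_iff Cp_apply_carrier)
  finally show ?thesis
    using Cp.rcos_eq_iff_mult_inv[OF subgroup_Cp_into_G0 assms] by simp
qed

lemma finite_connected_components_of_finite_index: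
  assumes "finite (rcosets\<^bsub>Cp\<^esub> Cp0)" and "G0 \<noteq> carrier G"
  shows "finite (connected_components_of X)"
proof -
  obtain a where a: "a \<in> carrier G" "a \<notin> G0"
    using assms(2) G0_subset_carrier by blast
  have a_coset: "G0 #> a \<noteq> G0 #> \<one>"
    using a subgroup.m_inv_closed[OF subgroup_G0, of "inv a"] by (auto simp: rcos_G0_eq_iff)
  let ?clopen = "{U. closedin X U \<and> openin X U}"
  define step where "step U = restrict (\<lambda>x. if x \<in> U then a else \<one>) (topspace X)" for U
  have step_carrier: "step U \<in> carrier Cp" if "U \<in> ?clopen" for U
    unfolding step_def using that a(1)
    by (intro restrict_in_carrier_Cp continuous_map_if_clopen) (auto simp: topspace_eq_carrier)
  have "inj_on (\<lambda>U. Cp0 #>\<^bsub>Cp\<^esub> step U) ?clopen"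
  proof (rule inj_onI)
    fix U V assume U: "U \<in> ?clopen" and V: "V \<in> ?clopen"
      and eq: "Cp0 #>\<^bsub>Cp\<^esub> step U = Cp0 #>\<^bsub>Cp\<^esub> step V"
    have "Cp_into_G0 #>\<^bsub>Cp\<^esub> step U = Cp_into_G0 #>\<^bsub>Cp\<^esub> step V"
      by (rule Cp.rcos_eq_if_rcos_eq_subset[OF subgroup_Cp_into_G0 Cp0_subset_Cp_into_G0
            one_in_Cp0 step_carrier[OF U] step_carrier[OF V] eq])
    then have coset_eq: "G0 #> step U x = G0 #> step V x" if "x \<in> topspace X" for x
      using that step_carrier U V by (simp add: rcos_Cp_into_G0_eq_iff)
    have "x \<in> U \<longleftrightarrow> x \<in> V" if "x \<in> topspace X" for x
      using coset_eq[OF that] that a_coset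
      by (cases "x \<in> U"; cases "x \<in> V") (simp_all add: step_def)
    then show "U = V"
      using U V closedin_subset by blast
  qed
  moreover have "(\<lambda>U. Cp0 #>\<^bsub>Cp\<^esub> step U) ` ?clopen \<subseteq> rcosets\<^bsub>Cp\<^esub> Cp0"
    using step_carrier by (auto simp: RCOSETS_def)
  ultimately have "finite ?clopen"
    using finite_imageD finite_subset[OF _ assms(1)] by blast
  then show ?thesis
    by (rule finite_connected_components_of_finite_clopen)
qed

lemma rcos_G0_eq_if_connected_component_of:
  assumes f: "f \<in> carrier Cp" and xy: "connected_component_of X x y"
  shows "G0 #> f x = G0 #> f y"
proof -
  have x: "x \<in> topspace X" and y: "y \<in> topspace X"
    using xy connected_component_in_topspace by metis+
  obtain S where S: "connectedin X S" "x \<in> S" "y \<in> S"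
    using xy unfolding connected_component_of_def by blast
  have "continuous_map X T (\<lambda>z. f z \<otimes> inv f x)"
    using f x Cp_apply_carrier
    by (intro topological_group_mult[OF topological_group]) (auto simp: carrier_Cp topspace_eq_carrier)
  then have "connectedin T ((\<lambda>z. f z \<otimes> inv f x) ` S)"
    using S(1) by (rule connectedin_continuous_map_image)
  moreover have "\<one> \<in> (\<lambda>z. f z \<otimes> inv f x) ` S"
    using S(2) f x Cp_apply_carrier by (metis image_eqI r_inv)
  ultimately have "(\<lambda>z. f z \<otimes> inv f x) ` S \<subseteq> G0"
    by (rule connected_component_of_maximal)
  then have "f y \<otimes> inv f x \<in> G0"
    using S(3) by blast
  then show ?thesis
    using f x y Cp_apply_carrier by (simp add: rcos_G0_eq_iff)
qed

definition coset_profile :: "('a \<Rightarrow> 'g) \<Rightarrow> 'a set \<Rightarrow> 'g set"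
  where "coset_profile f = (\<lambda>C\<in>connected_components_of X. G0 #> f (SOME x. x \<in> C))"

lemma coset_profile_component:
  assumes "f \<in> carrier Cp" "x \<in> topspace X"
  shows "coset_profile f (connected_component_of_set X x) = G0 #> f x"
proof -
  let ?C = "connected_component_of_set X x"
  have "x \<in> ?C"
    using assms(2) by (simp add: connected_component_of_refl)
  then have "connected_component_of X x (SOME y. y \<in> ?C)"
    by (metis mem_Collect_eq someI)
  then show ?thesis
    using assms rcos_G0_eq_if_connected_component_of
    by (simp add: coset_profile_def connected_component_in_connected_components_of)
qed

lemma coset_profile_eq_iff:
  assumes "f \<in> carrier Cp" "g \<in> carrier Cp"
  shows "coset_profile f = coset_profile g \<longleftrightarrow> (\<forall>x\<in>topspace X. G0 #> f x = G0 #> g x)"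
proof
  assume "coset_profile f = coset_profile g"
  then show "\<forall>x\<in>topspace X. G0 #> f x = G0 #> g x"
    using assms coset_profile_component by metis
next
  assume "\<forall>x\<in>topspace X. G0 #> f x = G0 #> g x"
  then show "coset_profile f = coset_profile g"
    using assms coset_profile_component
    by (intro extensionalityI[of _ "connected_components_of X"])
      (auto simp: coset_profile_def connected_components_of_def)
qed

lemma coset_profile_in_PiE:
  assumes "f \<in> carrier Cp"
  shows "coset_profile f \<in> (connected_components_of X \<rightarrow>\<^sub>E rcosets G0)"
proof -
  have "(SOME x. x \<in> C) \<in> topspace X" if "C \<in> connected_components_of X" for C
    using that nonempty_connected_components_of connected_components_of_subset
    by (metis ex_in_conv someI subsetD)
  then show ?thesis
    using assms by (simp add: coset_profile_def rcosetsI G0_subset_carrier Cp_apply_carrier)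
qed

lemma coset_profile_surj:
  assumes fin: "finite (connected_components_of X)"
    and w: "w \<in> (connected_components_of X \<rightarrow>\<^sub>E rcosets G0)"
  shows "\<exists>f\<in>carrier Cp. coset_profile f = w"
proof -
  have "\<forall>c\<in>rcosets G0. \<exists>a\<in>carrier G. G0 #> a = c"
    by (auto simp: RCOSETS_def)
  then obtain r where r: "\<And>c. c \<in> rcosets G0 \<Longrightarrow> r c \<in> carrier G \<and> G0 #> r c = c"
    by metis
  define f where "f = restrict (\<lambda>x. r (w (connected_component_of_set X x))) (topspace X)"
  have "continuous_map X T (\<lambda>x. r (w (connected_component_of_set X x)))"
    using r PiE_mem[OF w]
    by (intro continuous_map_constant_on_components[OF fin, of "r \<circ> w", simplified])
      (auto simp: topspace_eq_carrier)
  then have f: "f \<in> carrier Cp"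
    unfolding f_def by (rule restrict_in_carrier_Cp)
  have "coset_profile f (connected_component_of_set X x) = w (connected_component_of_set X x)"
    if "x \<in> topspace X" for x
  proof -
    have "w (connected_component_of_set X x) \<in> rcosets G0"
      using PiE_mem[OF w] that by (simp add: connected_component_in_connected_components_of)
    then show ?thesis
      using coset_profile_component[OF f that] that r by (simp add: f_def)
  qed
  then have "coset_profile f = w"
    using w by (intro extensionalityI[of _ "connected_components_of X"])
      (auto simp: coset_profile_def connected_components_of_def PiE_iff)
  with f show ?thesis
    by blast
qed

lemma coset_profile_image:
  "finite (connected_components_of X) \<Longrightarrow>
    coset_profile ` carrier Cp = (connected_components_of X \<rightarrow>\<^sub>E rcosets G0)"
  using coset_profile_in_PiE coset_profile_surj by blast

lemma card_rcosets_Cp_into_G0: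
  assumes "finite (connected_components_of X)"
  shows "card (rcosets\<^bsub>Cp\<^esub> Cp_into_G0) = card (rcosets G0) ^ card (connected_components_of X)"
proof -
  have "card (rcosets\<^bsub>Cp\<^esub> Cp_into_G0) = card ((\<lambda>f. Cp_into_G0 #>\<^bsub>Cp\<^esub> f) ` carrier Cp)"
    by (simp add: RCOSETS_def UNION_singleton_eq_range)
  also have "\<dots> = card (coset_profile ` carrier Cp)"
    by (rule card_image_eq_card_image) (simp add: rcos_Cp_into_G0_eq_iff coset_profile_eq_iff)
  also have "\<dots> = card (rcosets G0) ^ card (connected_components_of X)"
    by (simp add: coset_profile_image assms card_PiE)
  finally show ?thesis .
qed

end

locale Cp_space_Tychonoff = Cp_space +
  assumes path_component_eq_G0: "path_component_of_set T \<one> = G0"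
    and tychonoff: "tychonoff_space X"
begin

lemma path_to_bump:
  assumes a: "a \<in> topspace X" and F: "finite F" "F \<subseteq> topspace X" "a \<notin> F" and b: "b \<in> G0"
  shows "\<exists>q. pathin Cp_top q \<and> q 0 = \<one>\<^bsub>Cp\<^esub> \<and> q ` {0..1} \<subseteq> Cp_into_G0 \<and>
             q 1 a = b \<and> (\<forall>x\<in>F. q 1 x = \<one>)"
proof -
  obtain \<gamma> where \<gamma>: "pathin T \<gamma>" "\<gamma> 0 = \<one>" "\<gamma> 1 = b"
    using b path_component_eq_G0 unfolding path_component_of_def by blast
  have \<gamma>_G0: "\<gamma> ` {0..1} \<subseteq> G0"
    using path_image_subset_connected_component_of[OF \<gamma>(1)] by (simp add: \<gamma>(2))
  have "closedin X F"
    using tychonoff F t1_space_closedin_finite by (auto simp: tychonoff_space_def)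
  then obtain \<phi> :: "'a \<Rightarrow> real" where \<phi>: "continuous_map X (top_of_set {0..1}) \<phi>" "\<phi> a = 0" "\<phi> ` F \<subseteq> {1}"
    using tychonoff a F(3) unfolding tychonoff_space_def completely_regular_space_def by blast
  have s: "continuous_map (prod_topology (top_of_set {0..1}) X) (top_of_set {0..1})
             (\<lambda>(t, x). t * (1 - \<phi> x))"
    by (rule continuous_map_mult_one_minus[OF \<phi>(1)])
  then have s_01: "t * (1 - \<phi> x) \<in> {0..1}" if "t \<in> {0..1}" "x \<in> topspace X" for t x
    using funcset_mem[OF continuous_map_funspace[OF s], of "(t, x)"] that by simp
  have "continuous_map (prod_topology (top_of_set {0..1}) X) T (\<lambda>(t, x). \<gamma> (t * (1 - \<phi> x)))"
    using continuous_map_compose[OF s \<gamma>(1)[unfolded pathin_def]] by (simp add: o_def case_prod_unfold)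
  define q where "q t = restrict (\<lambda>x. \<gamma> (t * (1 - \<phi> x))) (topspace X)" for t
  have "pathin Cp_top q"
    unfolding pathin_def q_def using continuous_map_Cp_top_uncurry[OF \<open>continuous_map _ T _\<close>] by simp
  moreover have "q 0 = \<one>\<^bsub>Cp\<^esub>"
    by (simp add: q_def one_Cp \<gamma>(2))
  moreover have "q ` {0..1} \<subseteq> Cp_into_G0"
    using \<open>pathin Cp_top q\<close> s_01 \<gamma>_G0
    by (auto simp: Cp_into_G0_def pathin_def continuous_map_Cp_top_iff q_def image_subset_iff)
  moreover have "q 1 a = b" "\<forall>x\<in>F. q 1 x = \<one>"
    using a F(2) \<phi>(2,3) \<gamma>(2,3) by (auto simp: q_def)
  ultimately show ?thesis
    by blast
qed

lemma path_approximation: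
  assumes "finite F" "F \<subseteq> topspace X" "f \<in> Cp_into_G0"
  shows "\<exists>p. pathin Cp_top p \<and> p 0 = \<one>\<^bsub>Cp\<^esub> \<and> p ` {0..1} \<subseteq> Cp_into_G0 \<and> (\<forall>x\<in>F. p 1 x = f x)"
  using assms(1,2)
proof (induction F rule: finite_induct)
  case empty
  show ?case
    using subgroup.one_closed[OF subgroup_Cp_into_G0]
    by (intro exI[of _ "\<lambda>_. \<one>\<^bsub>Cp\<^esub>"]) (simp add: pathin_def topspace_Cp_top image_subset_iff)
next
  case (insert a F)
  obtain p where p: "pathin Cp_top p" "p 0 = \<one>\<^bsub>Cp\<^esub>" "p ` {0..1} \<subseteq> Cp_into_G0" "\<forall>x\<in>F. p 1 x = f x"
    using insert by auto
  have a: "a \<in> topspace X"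
    using insert.prems by blast
  have "p 1 \<in> Cp_into_G0"
    using p(3) by auto
  then have p1: "p 1 \<in> carrier Cp" "p 1 a \<in> G0"
    using a by (auto simp: Cp_into_G0_def)
  have f: "f \<in> carrier Cp" "f a \<in> G0"
    using assms(3) a by (auto simp: Cp_into_G0_def)
  have "inv (p 1 a) \<otimes> f a \<in> G0"
    using subgroup.m_closed[OF subgroup_G0 subgroup.m_inv_closed[OF subgroup_G0 p1(2)] f(2)] .
  then obtain q where q: "pathin Cp_top q" "q 0 = \<one>\<^bsub>Cp\<^esub>" "q ` {0..1} \<subseteq> Cp_into_G0"
      "q 1 a = inv (p 1 a) \<otimes> f a" "\<forall>x\<in>F. q 1 x = \<one>"
    using path_to_bump[OF a insert.hyps(1)] insert.hyps(2) insert.prems by blast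
  have "pathin Cp_top (\<lambda>t. p t \<otimes>\<^bsub>Cp\<^esub> q t)"
    using p(1) q(1) unfolding pathin_def by (rule continuous_map_Cp_mult)
  moreover have "p 0 \<otimes>\<^bsub>Cp\<^esub> q 0 = \<one>\<^bsub>Cp\<^esub>"
    by (simp add: p(2) q(2))
  moreover have "(\<lambda>t. p t \<otimes>\<^bsub>Cp\<^esub> q t) ` {0..1} \<subseteq> Cp_into_G0"
    using p(3) q(3) subgroup.m_closed[OF subgroup_Cp_into_G0] by blast
  moreover have "(p 1 \<otimes>\<^bsub>Cp\<^esub> q 1) x = f x" if "x \<in> insert a F" for x
  proof -
    have "x \<in> topspace X" "f x \<in> carrier G"
      using that insert.prems f(1) Cp_apply_carrier by auto
    moreover have "p 1 a \<in> carrier G"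
      using p1(1) a Cp_apply_carrier by blast
    ultimately show ?thesis
      using that p(4) q(4,5) f(1) by (auto simp: mult_Cp m_assoc[symmetric])
  qed
  ultimately show ?case
    by blast
qed

lemma Cp_into_G0_subset_Cp0: "Cp_into_G0 \<subseteq> Cp0"
proof
  fix f assume f: "f \<in> Cp_into_G0"
  let ?P = "product_topology (\<lambda>_. T) (topspace X)"
  have carrier_P: "carrier Cp \<subseteq> topspace ?P"
    using topspace_Cp_top unfolding Cp_topology_def by auto
  have Cp0_carrier: "Cp0 \<subseteq> carrier Cp"
    using connected_component_of_subset_topspace topspace_Cp_top by metis
  have "f \<in> ?P closure_of Cp0"
  proof (rule in_closure_of_product_topology)
    show "f \<in> topspace ?P"
      using f carrier_P by (auto simp: Cp_into_G0_def)
    show "Cp0 \<subseteq> topspace ?P"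
      using Cp0_carrier carrier_P by blast
  next
    fix F assume "finite F" "F \<subseteq> topspace X"
    then obtain p where p: "pathin Cp_top p" "p 0 = \<one>\<^bsub>Cp\<^esub>" "\<forall>x\<in>F. p 1 x = f x"
      using path_approximation f by blast
    have "p 1 \<in> p ` {0..1}"
      by simp
    then have "p 1 \<in> Cp0"
      using path_image_subset_connected_component_of[OF p(1)] p(2) by (simp only: subsetD)
    then show "\<exists>g\<in>Cp0. \<forall>x\<in>F. g x = f x"
      using p(3) by blast
  qed
  then have "f \<in> Cp_top closure_of Cp0"
    using f Cp0_carrier by (auto simp: Cp_topology_def closure_of_subtopology Int_absorb1 Cp_into_G0_def)
  then show "f \<in> Cp0"
    by (simp add: closure_of_closedin closedin_connected_component_of)
qed

lemma Cp0_eq_Cp_into_G0: "Cp0 = Cp_into_G0"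
  using Cp0_subset_Cp_into_G0 Cp_into_G0_subset_Cp0 by blast

end

theorem proposition8p6:
  fixes X :: "'a topology" and G :: "('g, 'b) monoid_scheme" and T :: "'g topology"
    and m n :: nat
  assumes "m \<ge> 1" and "n \<ge> 2"
    and "topological_group G T"
    and "path_component_of_set T \<one>\<^bsub>G\<^esub> = connected_component_of_set T \<one>\<^bsub>G\<^esub>"
    and "card (rcosets\<^bsub>G\<^esub> (connected_component_of_set T \<one>\<^bsub>G\<^esub>)) = n"
    and "tychonoff_space X" and "topspace X \<noteq> {}"
  shows "card (connected_components_of X) = m \<longleftrightarrow>
         card (rcosets\<^bsub>Cp_group X G T\<^esub>
                 (connected_component_of_set (Cp_topology X G T) \<one>\<^bsub>Cp_group X G T\<^esub>)) = n ^ m"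
proof -
  interpret Cp_space_Tychonoff X G T
    by unfold_locales (use assms(3,4,6) in auto)
  have G0_proper: "G0 \<noteq> carrier G"
    using assms(2,5) rcosets_carrier by auto
  have index: "card (rcosets\<^bsub>Cp\<^esub> Cp0) = n ^ card (connected_components_of X)"
    if "finite (connected_components_of X)"
    using card_rcosets_Cp_into_G0[OF that] assms(5) by (simp add: Cp0_eq_Cp_into_G0)
  show ?thesis
  proof
    assume m: "card (connected_components_of X) = m"
    then have "finite (connected_components_of X)"
      using assms(1) card.infinite by force
    then show "card (rcosets\<^bsub>Cp\<^esub> Cp0) = n ^ m"
      using index m by simp
  next
    assume index_m: "card (rcosets\<^bsub>Cp\<^esub> Cp0) = n ^ m"
    then have "finite (rcosets\<^bsub>Cp\<^esub> Cp0)"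
      using assms(2) card.infinite by fastforce
    then have "finite (connected_components_of X)"
      using G0_proper by (rule finite_connected_components_of_finite_index)
    then show "card (connected_components_of X) = m"
      using index index_m assms(2) by (simp add: power_inject_exp)
  qed
qed

end
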